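(* Let $t\ge 0$ and $s\ge 1$ be integers, and let $G$ be a finite incomparability graph such that no $t$-minor of $G$ is isomorphic to the star $K_{1,s}$ (a center adjacent to $s$ pairwise non-adjacent leaves). Then $\hat\beta_t(G)\le s$.
   Context: All graphs are finite and simple. An incomparability graph is a graph whose complement admits a transitive orientation. For an integer $t\ge 0$, a graph $H$ is a $t$-shallow minor ($t$-minor) of a graph $G$ if there are pairwise disjoint sets $V_v\subseteq V(G)$, $v\in V(H)$, each inducing a connected subgraph of $G$ of radius at most $t$, such that $uv\in E(H)$ if and only if some edge of $G$ joins $V_u$ and $V_v$ (i.e. $H$ is obtained by contracting connected subgraphs of radius at most $t$ and deleting vertices, but not edges). For a graph $H$, $\beta(H)$ is the minimum number of cliques partitioning $V(H)$; for $x\in V(H)$, $H_x$ is the subgraph induced by the closed neighborhood $N_H[x]$; $\tilde\beta(H)=\min_{x\in V(H)}\beta(H_x)$; and $\hat\beta_t(G)=\max\{\tilde\beta(H): H \text{ a nonempty } t\text{-minor of } G\}$. *)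

theory Defs
  imports Main "HOL-Library.Disjoint_Sets"
begin

definition graph :: "'a set \<Rightarrow> ('a \<Rightarrow> 'a \<Rightarrow> bool) \<Rightarrow> bool" where
  "graph V E \<longleftrightarrow> finite V \<and> (\<forall>u v. E u v \<longrightarrow> u \<in> V \<and> v \<in> V \<and> u \<noteq> v)
     \<and> (\<forall>u v. E u v \<longrightarrow> E v u)"

definition incomparability_graph :: "'a set \<Rightarrow> ('a \<Rightarrow> 'a \<Rightarrow> bool) \<Rightarrow> bool" where
  "incomparability_graph V E \<longleftrightarrow> (\<exists>P :: 'a \<Rightarrow> 'a \<Rightarrow> bool.
      (\<forall>u v. P u v \<longrightarrow> u \<in> V \<and> v \<in> V \<and> u \<noteq> v \<and> \<not> E u v)
    \<and> (\<forall>u\<in>V. \<forall>v\<in>V. u \<noteq> v \<and> \<not> E u v \<longrightarrow> P u v \<or> P v u)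
    \<and> (\<forall>u v. P u v \<longrightarrow> \<not> P v u)
    \<and> (\<forall>u v w. P u v \<and> P v w \<longrightarrow> P u w))"

fun within_dist :: "('a \<Rightarrow> 'a \<Rightarrow> bool) \<Rightarrow> 'a set \<Rightarrow> nat \<Rightarrow> 'a \<Rightarrow> 'a \<Rightarrow> bool" where
  "within_dist E S 0 c x \<longleftrightarrow> c = x \<and> c \<in> S"
| "within_dist E S (Suc k) c x \<longleftrightarrow> within_dist E S k c x
     \<or> (\<exists>y. within_dist E S k c y \<and> E y x \<and> x \<in> S)"

definition radius_le :: "('a \<Rightarrow> 'a \<Rightarrow> bool) \<Rightarrow> 'a set \<Rightarrow> nat \<Rightarrow> bool" where
  "radius_le E S t \<longleftrightarrow> (\<exists>c\<in>S. \<forall>x\<in>S. within_dist E S t c x)"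

definition shallow_minor :: "nat \<Rightarrow> 'b set \<Rightarrow> ('b \<Rightarrow> 'b \<Rightarrow> bool) \<Rightarrow> 'a set \<Rightarrow> ('a \<Rightarrow> 'a \<Rightarrow> bool) \<Rightarrow> bool" where
  "shallow_minor t VH EH V E \<longleftrightarrow> graph VH EH \<and> (\<exists>B :: 'b \<Rightarrow> 'a set.
      (\<forall>v\<in>VH. B v \<subseteq> V \<and> radius_le E (B v) t)
    \<and> (\<forall>u\<in>VH. \<forall>v\<in>VH. u \<noteq> v \<longrightarrow> B u \<inter> B v = {})
    \<and> (\<forall>u\<in>VH. \<forall>v\<in>VH. u \<noteq> v \<longrightarrow> (EH u v \<longleftrightarrow> (\<exists>x\<in>B u. \<exists>y\<in>B v. E x y))))"

definition star_V :: "nat \<Rightarrow> nat set" where "star_V s = {0..s}"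
definition star_E :: "nat \<Rightarrow> nat \<Rightarrow> nat \<Rightarrow> bool" where
  "star_E s u v \<longleftrightarrow> u \<le> s \<and> v \<le> s \<and> ((u = 0 \<and> v \<noteq> 0) \<or> (v = 0 \<and> u \<noteq> 0))"

definition isomorphic :: "'a set \<Rightarrow> ('a \<Rightarrow> 'a \<Rightarrow> bool) \<Rightarrow> 'b set \<Rightarrow> ('b \<Rightarrow> 'b \<Rightarrow> bool) \<Rightarrow> bool" where
  "isomorphic V E W F \<longleftrightarrow> (\<exists>f. bij_betw f V W \<and> (\<forall>u\<in>V. \<forall>v\<in>V. E u v \<longleftrightarrow> F (f u) (f v)))"

definition is_clique :: "('a \<Rightarrow> 'a \<Rightarrow> bool) \<Rightarrow> 'a set \<Rightarrow> bool" where
  "is_clique E C \<longleftrightarrow> (\<forall>u\<in>C. \<forall>v\<in>C. u \<noteq> v \<longrightarrow> E u v)"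

definition beta :: "'a set \<Rightarrow> ('a \<Rightarrow> 'a \<Rightarrow> bool) \<Rightarrow> nat" where
  "beta V E = (LEAST k. \<exists>P. partition_on V P \<and> (\<forall>C\<in>P. is_clique E C) \<and> card P = k)"

definition closed_nbhd :: "'a set \<Rightarrow> ('a \<Rightarrow> 'a \<Rightarrow> bool) \<Rightarrow> 'a \<Rightarrow> 'a set" where
  "closed_nbhd V E x = insert x {y\<in>V. E x y}"

definition beta_tilde :: "'a set \<Rightarrow> ('a \<Rightarrow> 'a \<Rightarrow> bool) \<Rightarrow> nat" where
  "beta_tilde V E = Min ((\<lambda>x. beta (closed_nbhd V E x) (\<lambda>u v. u \<in> closed_nbhd V E x \<and> v \<in> closed_nbhd V E x \<and> E u v)) ` V)"

text \<open>hat beta_t(G): maximum of beta_tilde over nonempty t-minors (vertices labelled by nat,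
  which loses nothing since minors are finite).\<close>
definition beta_hat :: "nat \<Rightarrow> 'a set \<Rightarrow> ('a \<Rightarrow> 'a \<Rightarrow> bool) \<Rightarrow> nat" where
  "beta_hat t V E = Sup {beta_tilde VH EH | (VH :: nat set) EH. VH \<noteq> {} \<and> shallow_minor t VH EH V E}"

end

theory Submission
  imports Defs
begin

text \<open>Let H be a t-minor of G and x a vertex of H. Because branch sets are connected and
  no pair of the transitive orientation of the complement of G is an edge, two non-adjacent
  branch sets are ordered wholesale by that orientation; so H is again an incomparability
  graph. In the resulting order on N(x), chains are independent sets and antichains are
  cliques. An independent set of s neighbours of x would, together with x, induce a t-minor
  isomorphic to K_{1,s}; hence chains have fewer than s elements, Mirsky's theorem covers
  N(x) by at most s - 1 cliques, and adding {x} gives \<beta>(H_x) \<le> s.\<close>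

definition strict_chain :: "('a \<Rightarrow> 'a \<Rightarrow> bool) \<Rightarrow> 'a set \<Rightarrow> bool" where
  "strict_chain Q C \<longleftrightarrow> (\<forall>u\<in>C. \<forall>v\<in>C. u \<noteq> v \<longrightarrow> Q u v \<or> Q v u)"

definition minimal_elements :: "('a \<Rightarrow> 'a \<Rightarrow> bool) \<Rightarrow> 'a set \<Rightarrow> 'a set" where
  "minimal_elements Q S = {m\<in>S. \<forall>y\<in>S. \<not> Q y m}"

lemma minimal_elements_nonempty:
  assumes "finite S" "S \<noteq> {}" "asymp Q" "transp Q"
  shows "minimal_elements Q S \<noteq> {}"
  using assms(1,2)
proof (induction S rule: finite_ne_induct)
  case (singleton x)
  have "\<not> Q x x" using asympD[OF assms(3)] by blast
  then show ?case unfolding minimal_elements_def by auto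
next
  case (insert x F)
  then obtain m where m: "m \<in> F" "\<forall>y\<in>F. \<not> Q y m" unfolding minimal_elements_def by blast
  show ?case
  proof (cases "Q x m")
    case True
    then have "\<forall>y\<in>insert x F. \<not> Q y x"
      using m asympD[OF assms(3)] transpD[OF assms(4)] by blast
    then show ?thesis unfolding minimal_elements_def by blast
  next
    case False
    then show ?thesis using m unfolding minimal_elements_def by blast
  qed
qed

lemma minimal_element_below:
  assumes "finite S" "x \<in> S" "asymp Q" "transp Q"
  shows "\<exists>m\<in>minimal_elements Q S. m = x \<or> Q m x"
proof -
  define D where "D = {y\<in>S. y = x \<or> Q y x}"
  obtain m where m: "m \<in> D" "\<forall>y\<in>D. \<not> Q y m"
    using minimal_elements_nonempty[of D Q] assms unfolding D_def minimal_elements_def by auto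
  have "\<not> Q y m" if "y \<in> S" for y
  proof
    assume "Q y m"
    then have "y \<in> D" using m(1) transpD[OF assms(4)] that unfolding D_def by blast
    then show False using m(2) \<open>Q y m\<close> by blast
  qed
  then show ?thesis using m(1) unfolding D_def minimal_elements_def by blast
qed

lemma strict_chain_extend_by_minimal:
  assumes "finite S" "asymp Q" "transp Q"
    and "C \<subseteq> S - minimal_elements Q S" "C \<noteq> {}" "strict_chain Q C"
  shows "\<exists>m\<in>minimal_elements Q S. strict_chain Q (insert m C)"
proof -
  have "finite C" using assms(1,4) finite_subset by blast
  then obtain c where c: "c \<in> C" "\<forall>y\<in>C. \<not> Q y c"
    using minimal_elements_nonempty assms(2,3,5) unfolding minimal_elements_def by blast
  then have "c \<in> S" "c \<notin> minimal_elements Q S" using assms(4) by auto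
  then obtain m where m: "m \<in> minimal_elements Q S" "Q m c"
    using minimal_element_below[OF assms(1) _ assms(2,3)] by blast
  have "Q m z" if "z \<in> C" for z
  proof (cases "z = c")
    case False
    then have "Q c z" using c that assms(6) unfolding strict_chain_def by blast
    then show ?thesis using m(2) transpD[OF assms(3)] by blast
  qed (use m(2) in simp)
  then show ?thesis using m(1) assms(6) unfolding strict_chain_def by blast
qed

text \<open>Mirsky's theorem; the induction removes the antichain of minimal elements.\<close>
lemma partition_into_antichains:
  assumes "finite S" "asymp Q" "transp Q"
    and "\<And>C. C \<subseteq> S \<Longrightarrow> strict_chain Q C \<Longrightarrow> card C \<le> k"
  shows "\<exists>\<A>. partition_on S \<A> \<and> (\<forall>A\<in>\<A>. \<forall>u\<in>A. \<forall>v\<in>A. \<not> Q u v) \<and> card \<A> \<le> k"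
  using assms(1,4)
proof (induction k arbitrary: S)
  case 0
  have "S = {}"
  proof (rule ccontr)
    assume "S \<noteq> {}"
    then obtain x where "x \<in> S" by blast
    then have "card {x} \<le> 0" using "0.prems"(2) unfolding strict_chain_def by blast
    then show False by simp
  qed
  then show ?case by (intro exI[of _ "{}"]) (simp add: partition_on_empty)
next
  case (Suc k)
  show ?case
  proof (cases "S = {}")
    case True
    then show ?thesis by (intro exI[of _ "{}"]) (simp add: partition_on_empty)
  next
    case False
    define M where "M = minimal_elements Q S"
    have "card C \<le> k" if C: "C \<subseteq> S - M" "strict_chain Q C" for C
    proof (cases "C = {}")
      case False
      then obtain m where m: "m \<in> M" "strict_chain Q (insert m C)"
        using strict_chain_extend_by_minimal[OF Suc.prems(1) assms(2,3)] C unfolding M_def by blast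
      have "m \<notin> C" "insert m C \<subseteq> S" using C(1) m(1) unfolding M_def minimal_elements_def by auto
      moreover have "finite C" using C(1) Suc.prems(1) finite_subset by blast
      ultimately show ?thesis using Suc.prems(2)[OF _ m(2)] by simp
    qed simp
    then obtain \<A> where \<A>: "partition_on (S - M) \<A>" "\<forall>A\<in>\<A>. \<forall>u\<in>A. \<forall>v\<in>A. \<not> Q u v"
      "card \<A> \<le> k"
      using Suc.IH[of "S - M"] Suc.prems(1) by blast
    have "disjnt M (\<Union>\<A>)" using \<A>(1) unfolding partition_on_def disjnt_def by blast
    moreover have "M \<noteq> {}" "M \<subseteq> S"
      using minimal_elements_nonempty[OF Suc.prems(1) False assms(2,3)]
      unfolding M_def minimal_elements_def by auto
    ultimately have "partition_on S (insert M \<A>)" using partition_on_insert \<A>(1) by blast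
    moreover have "\<forall>A\<in>insert M \<A>. \<forall>u\<in>A. \<forall>v\<in>A. \<not> Q u v"
      using \<A>(2) unfolding M_def minimal_elements_def by auto
    moreover have "card (insert M \<A>) \<le> Suc k" using \<A>(3) card_insert_le_m1[of "Suc k"] by simp
    ultimately show ?thesis by blast
  qed
qed

lemma within_dist_stays_below:
  assumes "within_dist E S k c x" "R c b" "\<forall>a\<in>S. R a b \<or> R b a"
    and "\<And>u v. R u v \<Longrightarrow> \<not> E u v" "transp R"
  shows "R x b"
  using assms(1)
proof (induction k arbitrary: x)
  case 0
  then show ?case using assms(2) by simp
next
  case (Suc k)
  show ?case
  proof (cases "within_dist E S k c x")
    case False
    then obtain y where y: "within_dist E S k c y" "E y x" "x \<in> S" using Suc.prems by auto
    have "R y b" using Suc.IH[OF y(1)] .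
    show ?thesis
    proof (rule ccontr)
      assume "\<not> R x b"
      then have "R b x" using assms(3) y(3) by blast
      then have "R y x" using \<open>R y b\<close> transpD[OF assms(5)] by blast
      then show False using y(2) assms(4) by blast
    qed
  qed (use Suc.IH in blast)
qed

lemma radius_le_sets_ordered:
  assumes "radius_le E A t" "radius_le E B t'" "symp E" "transp R"
    and "\<And>u v. R u v \<Longrightarrow> \<not> E u v" "\<forall>a\<in>A. \<forall>b\<in>B. R a b \<or> R b a"
  shows "(\<forall>a\<in>A. \<forall>b\<in>B. R a b) \<or> (\<forall>a\<in>A. \<forall>b\<in>B. R b a)"
proof -
  obtain ca where ca: "ca \<in> A" "\<forall>x\<in>A. within_dist E A t ca x"
    using assms(1) unfolding radius_le_def by blast
  obtain cb where cb: "cb \<in> B" "\<forall>x\<in>B. within_dist E B t' cb x"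
    using assms(2) unfolding radius_le_def by blast
  have all_below: "\<forall>a\<in>A. \<forall>b\<in>B. R' a b"
    if "R' ca cb" "transp R'" "\<And>u v. R' u v \<Longrightarrow> \<not> E u v"
      "\<forall>a\<in>A. \<forall>b\<in>B. R' a b \<or> R' b a" for R'
  proof (intro ballI)
    fix a b assume a: "a \<in> A" and b: "b \<in> B"
    have "R' a cb"
      using within_dist_stays_below[of E A t ca a R' cb] ca a cb(1) that by blast
    moreover have "transp (\<lambda>x y. R' y x)" using that(2) unfolding transp_def by blast
    moreover have "\<not> E u v" if "R' v u" for u v
      using that \<open>\<And>u v. R' u v \<Longrightarrow> \<not> E u v\<close> assms(3) by (blast dest: sympD)
    ultimately show "R' a b"
      using within_dist_stays_below[of E B t' cb b "\<lambda>x y. R' y x" a] cb b a that(4) by blast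
  qed
  have "R ca cb \<or> R cb ca" using assms(6) ca(1) cb(1) by blast
  then show ?thesis
  proof
    assume "R cb ca"
    moreover have "transp (\<lambda>x y. R y x)" using assms(4) unfolding transp_def by blast
    moreover have "\<not> E u v" if "R v u" for u v
      using that assms(3,5) by (blast dest: sympD)
    ultimately show ?thesis using all_below[of "\<lambda>x y. R y x"] assms(6) by blast
  qed (use all_below assms(4,5,6) in blast)
qed

lemma shallow_minor_incomparability_graph:
  assumes "graph V E" "incomparability_graph V E" "shallow_minor t VH EH V E"
  shows "incomparability_graph VH EH"
proof -
  obtain P where P_sub: "\<forall>u v. P u v \<longrightarrow> u \<in> V \<and> v \<in> V \<and> u \<noteq> v \<and> \<not> E u v"
    and P_total: "\<forall>u\<in>V. \<forall>v\<in>V. u \<noteq> v \<and> \<not> E u v \<longrightarrow> P u v \<or> P v u"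
    and P_asym: "asymp P" and P_trans: "transp P"
    using assms(2) unfolding incomparability_graph_def asymp_on_def transp_def by blast
  obtain B where B_sub: "\<forall>v\<in>VH. B v \<subseteq> V \<and> radius_le E (B v) t"
    and B_disj: "\<forall>u\<in>VH. \<forall>v\<in>VH. u \<noteq> v \<longrightarrow> B u \<inter> B v = {}"
    and B_edge: "\<forall>u\<in>VH. \<forall>v\<in>VH. u \<noteq> v \<longrightarrow> (EH u v \<longleftrightarrow> (\<exists>x\<in>B u. \<exists>y\<in>B v. E x y))"
    using assms(3) unfolding shallow_minor_def by blast
  have B_ne: "B v \<noteq> {}" if "v \<in> VH" for v
    using B_sub that unfolding radius_le_def by blast
  have "symp E" using assms(1) unfolding graph_def symp_def by blast
  define Q where "Q u v \<longleftrightarrow> u \<in> VH \<and> v \<in> VH \<and> u \<noteq> v \<and> (\<forall>a\<in>B u. \<forall>b\<in>B v. P a b)" for u v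
  have Q_sub: "u \<in> VH \<and> v \<in> VH \<and> u \<noteq> v \<and> \<not> EH u v" if "Q u v" for u v
    using that B_edge P_sub unfolding Q_def by blast
  have Q_total: "Q u v \<or> Q v u" if uv: "u \<in> VH" "v \<in> VH" "u \<noteq> v" "\<not> EH u v" for u v
  proof -
    have "P a b \<or> P b a" if "a \<in> B u" "b \<in> B v" for a b
    proof -
      have "a \<noteq> b" "\<not> E a b" using B_disj B_edge uv that by blast+
      moreover have "a \<in> V" "b \<in> V" using B_sub uv that by blast+
      ultimately show ?thesis using P_total by blast
    qed
    then have "(\<forall>a\<in>B u. \<forall>b\<in>B v. P a b) \<or> (\<forall>a\<in>B u. \<forall>b\<in>B v. P b a)"
      using radius_le_sets_ordered[of E "B u" t "B v" t P] B_sub uv(1,2) \<open>symp E\<close> P_trans P_sub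
      by blast
    then show ?thesis using uv unfolding Q_def by blast
  qed
  have Q_asym: "\<not> Q v u" if "Q u v" for u v
  proof
    assume "Q v u"
    obtain a b where "a \<in> B u" "b \<in> B v" using B_ne \<open>Q u v\<close> unfolding Q_def by blast
    then show False using \<open>Q u v\<close> \<open>Q v u\<close> asympD[OF P_asym] unfolding Q_def by blast
  qed
  have Q_trans: "Q u w" if "Q u v" "Q v w" for u v w
  proof -
    obtain b where b: "b \<in> B v" using B_ne \<open>Q u v\<close> unfolding Q_def by blast
    have "u \<noteq> w" using Q_asym that by blast
    moreover have "P a c" if "a \<in> B u" "c \<in> B w" for a c
      using \<open>Q u v\<close> \<open>Q v w\<close> b that transpD[OF P_trans] unfolding Q_def by blast
    ultimately show ?thesis using that unfolding Q_def by blast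
  qed
  show ?thesis unfolding incomparability_graph_def
    by (rule exI[of _ Q]) (use Q_sub Q_total Q_asym Q_trans in blast)
qed

lemma shallow_minor_induced:
  assumes "shallow_minor t VH EH V E" "W \<subseteq> VH"
  shows "shallow_minor t W (\<lambda>u v. u \<in> W \<and> v \<in> W \<and> EH u v) V E"
proof -
  have "graph VH EH" using assms(1) unfolding shallow_minor_def by blast
  then have graph_W: "graph W (\<lambda>u v. u \<in> W \<and> v \<in> W \<and> EH u v)"
    using assms(2) finite_subset unfolding graph_def by blast
  obtain B where B: "\<forall>v\<in>VH. B v \<subseteq> V \<and> radius_le E (B v) t"
    "\<forall>u\<in>VH. \<forall>v\<in>VH. u \<noteq> v \<longrightarrow> B u \<inter> B v = {}"
    "\<forall>u\<in>VH. \<forall>v\<in>VH. u \<noteq> v \<longrightarrow> (EH u v \<longleftrightarrow> (\<exists>x\<in>B u. \<exists>y\<in>B v. E x y))"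
    using assms(1) unfolding shallow_minor_def by blast
  have "\<forall>v\<in>W. B v \<subseteq> V \<and> radius_le E (B v) t"
    using B(1) assms(2) by blast
  moreover have "\<forall>u\<in>W. \<forall>v\<in>W. u \<noteq> v \<longrightarrow> B u \<inter> B v = {}"
    using B(2) assms(2) by blast
  moreover have "\<forall>u\<in>W. \<forall>v\<in>W. u \<noteq> v \<longrightarrow>
       ((u \<in> W \<and> v \<in> W \<and> EH u v) \<longleftrightarrow> (\<exists>x\<in>B u. \<exists>y\<in>B v. E x y))"
    using B(3) assms(2) by blast
  ultimately show ?thesis using graph_W unfolding shallow_minor_def by blast
qed

lemma isomorphic_star:
  assumes "graph VH EH" "x \<in> VH" "I \<subseteq> {y\<in>VH. EH x y}" "card I = s"
    and "\<forall>u\<in>I. \<forall>v\<in>I. \<not> EH u v"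
  shows "isomorphic (insert x I) (\<lambda>u v. u \<in> insert x I \<and> v \<in> insert x I \<and> EH u v)
           (star_V s) (star_E s)"
proof -
  have EH_sym: "EH v u" if "EH u v" for u v using assms(1) that unfolding graph_def by blast
  have "\<not> EH x x" using assms(1) unfolding graph_def by blast
  then have "x \<notin> I" using assms(3) by blast
  have "finite VH" using assms(1) unfolding graph_def by blast
  moreover have "I \<subseteq> VH" using assms(3) by blast
  ultimately have "finite I" by (rule finite_subset[rotated])
  then obtain g where g: "bij_betw g I {1..s}"
    using finite_same_card_bij[of I "{1..s}"] assms(4) by auto
  define f where "f = g(x := 0)"
  have f_centre: "f x = 0" unfolding f_def by simp
  have f_leaf: "f v = g v" if "v \<in> I" for v using that \<open>x \<notin> I\<close> unfolding f_def by auto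
  have "bij_betw f {x} {0}" using f_centre by simp
  moreover have "bij_betw f I {1..s}" using g bij_betw_cong[of I f g] f_leaf by blast
  ultimately have "bij_betw f ({x} \<union> I) ({0} \<union> {1..s})" by (rule bij_betw_combine) simp
  moreover have "{0} \<union> {1..s} = star_V s" unfolding star_V_def by auto
  ultimately have bij: "bij_betw f (insert x I) (star_V s)" by simp
  have leaf_range: "1 \<le> f v \<and> f v \<le> s" if "v \<in> I" for v
    using bij_betwE[OF g] that f_leaf by fastforce
  have "EH u v \<longleftrightarrow> star_E s (f u) (f v)" if uv: "u \<in> insert x I" "v \<in> insert x I" for u v
  proof -
    consider "u = x" "v = x" | "u = x" "v \<in> I" | "u \<in> I" "v = x" | "u \<in> I" "v \<in> I"
      using uv by blast
    then show ?thesis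
    proof cases
      case 1
      then show ?thesis using \<open>\<not> EH x x\<close> f_centre unfolding star_E_def by simp
    next
      case 2
      then show ?thesis using assms(3) f_centre leaf_range[of v] unfolding star_E_def by auto
    next
      case 3
      then show ?thesis using assms(3) EH_sym f_centre leaf_range[of u] unfolding star_E_def by auto
    next
      case 4
      then show ?thesis using assms(5) leaf_range[of u] leaf_range[of v] unfolding star_E_def by auto
    qed
  qed
  then show ?thesis unfolding isomorphic_def using bij by (intro exI[of _ f]) simp
qed

lemma beta_closed_nbhd_le:
  assumes "graph VH EH" "incomparability_graph VH EH" "x \<in> VH" "s \<ge> 1"
    and "\<And>I. I \<subseteq> {y\<in>VH. EH x y} \<Longrightarrow> \<forall>u\<in>I. \<forall>v\<in>I. \<not> EH u v \<Longrightarrow> card I < s"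
  shows "beta (closed_nbhd VH EH x)
           (\<lambda>u v. u \<in> closed_nbhd VH EH x \<and> v \<in> closed_nbhd VH EH x \<and> EH u v) \<le> s"
proof -
  obtain P where P_sub: "\<forall>u v. P u v \<longrightarrow> u \<in> VH \<and> v \<in> VH \<and> u \<noteq> v \<and> \<not> EH u v"
    and P_total: "\<forall>u\<in>VH. \<forall>v\<in>VH. u \<noteq> v \<and> \<not> EH u v \<longrightarrow> P u v \<or> P v u"
    and P_asym: "asymp P" and P_trans: "transp P"
    using assms(2) unfolding incomparability_graph_def asymp_on_def transp_def by blast
  have EH_sym: "EH v u" if "EH u v" for u v using assms(1) that unfolding graph_def by blast
  have EH_irrefl: "\<not> EH u u" for u using assms(1) unfolding graph_def by blast
  define N where "N = {y\<in>VH. EH x y}"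
  have "finite N" using assms(1) unfolding N_def graph_def by simp
  have "card C \<le> s - 1" if C: "C \<subseteq> N" "strict_chain P C" for C
  proof -
    have "\<forall>u\<in>C. \<forall>v\<in>C. \<not> EH u v"
    proof (intro ballI)
      fix u v assume "u \<in> C" "v \<in> C"
      show "\<not> EH u v"
      proof (cases "u = v")
        case False
        then have "P u v \<or> P v u" using C(2) \<open>u \<in> C\<close> \<open>v \<in> C\<close> unfolding strict_chain_def by blast
        then show ?thesis using P_sub EH_sym by blast
      qed (simp add: EH_irrefl)
    qed
    then have "card C < s" using assms(5) C(1) unfolding N_def by simp
    then show ?thesis by linarith
  qed
  then obtain \<A> where \<A>: "partition_on N \<A>" "\<forall>A\<in>\<A>. \<forall>u\<in>A. \<forall>v\<in>A. \<not> P u v"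
    "card \<A> \<le> s - 1"
    using partition_into_antichains[OF \<open>finite N\<close> P_asym P_trans] by blast
  define X where "X = closed_nbhd VH EH x"
  have "x \<notin> N" using EH_irrefl unfolding N_def by blast
  have X_eq: "X = insert x N" unfolding X_def closed_nbhd_def N_def by simp
  have "disjnt {x} (\<Union>\<A>)" using \<A>(1) \<open>x \<notin> N\<close> unfolding partition_on_def disjnt_def by blast
  have part: "partition_on X (insert {x} \<A>)"
    unfolding partition_on_insert[OF \<open>disjnt {x} (\<Union>\<A>)\<close>] X_eq using \<A>(1) \<open>x \<notin> N\<close> by simp
  have "is_clique (\<lambda>u v. u \<in> X \<and> v \<in> X \<and> EH u v) A" if "A \<in> \<A>" for A
  proof -
    have "A \<subseteq> N" using \<A>(1) that unfolding partition_on_def by blast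
    show ?thesis unfolding is_clique_def
    proof (intro ballI impI)
      fix u v assume "u \<in> A" "v \<in> A" "u \<noteq> v"
      then have "\<not> P u v" "\<not> P v u" "u \<in> N" "v \<in> N" using \<A>(2) that \<open>A \<subseteq> N\<close> by blast+
      then show "u \<in> X \<and> v \<in> X \<and> EH u v" using P_total \<open>u \<noteq> v\<close> X_eq unfolding N_def by blast
    qed
  qed
  moreover have "is_clique (\<lambda>u v. u \<in> X \<and> v \<in> X \<and> EH u v) {x}" unfolding is_clique_def by blast
  ultimately have cliques: "\<forall>A\<in>insert {x} \<A>. is_clique (\<lambda>u v. u \<in> X \<and> v \<in> X \<and> EH u v) A"
    by blast
  have "beta X (\<lambda>u v. u \<in> X \<and> v \<in> X \<and> EH u v) \<le> card (insert {x} \<A>)"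
    unfolding beta_def by (rule Least_le) (use part cliques in blast)
  also have "\<dots> \<le> s" using \<A>(3) assms(4) card_insert_le_m1[of s] by simp
  finally show ?thesis unfolding X_def .
qed

lemma independent_neighbours_card_less:
  fixes VH :: "'b set"
  assumes "shallow_minor t VH EH V E" "x \<in> VH"
    and "\<forall>(VH' :: 'b set) EH'. shallow_minor t VH' EH' V E \<longrightarrow>
           \<not> isomorphic VH' EH' (star_V s) (star_E s)"
    and "I \<subseteq> {y\<in>VH. EH x y}" "\<forall>u\<in>I. \<forall>v\<in>I. \<not> EH u v"
  shows "card I < s"
proof (rule ccontr)
  assume "\<not> card I < s"
  then obtain J where J: "J \<subseteq> I" "card J = s" by (meson not_less obtain_subset_with_card_n)
  have "graph VH EH" using assms(1) unfolding shallow_minor_def by blast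
  then have "isomorphic (insert x J) (\<lambda>u v. u \<in> insert x J \<and> v \<in> insert x J \<and> EH u v)
      (star_V s) (star_E s)"
    using isomorphic_star[of VH EH x J s] assms(2,4,5) J by blast
  moreover have "shallow_minor t (insert x J) (\<lambda>u v. u \<in> insert x J \<and> v \<in> insert x J \<and> EH u v) V E"
    using shallow_minor_induced[OF assms(1)] assms(2,4) J(1) by blast
  ultimately show False using assms(3) by blast
qed

lemma beta_tilde_shallow_minor_le:
  fixes VH :: "'b set"
  assumes "s \<ge> 1" "graph V E" "incomparability_graph V E"
    and "\<forall>(VH' :: 'b set) EH'. shallow_minor t VH' EH' V E \<longrightarrow>
           \<not> isomorphic VH' EH' (star_V s) (star_E s)"
    and "VH \<noteq> {}" "shallow_minor t VH EH V E"
  shows "beta_tilde VH EH \<le> s"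
proof -
  obtain x where x: "x \<in> VH" using assms(5) by blast
  have H: "graph VH EH" using assms(6) unfolding shallow_minor_def by blast
  then have "finite VH" unfolding graph_def by blast
  then have "beta_tilde VH EH \<le> beta (closed_nbhd VH EH x)
      (\<lambda>u v. u \<in> closed_nbhd VH EH x \<and> v \<in> closed_nbhd VH EH x \<and> EH u v)"
    unfolding beta_tilde_def using x by (intro Min_le) auto
  also have "\<dots> \<le> s"
    using beta_closed_nbhd_le[OF H shallow_minor_incomparability_graph[OF assms(2,3,6)] x assms(1)]
      independent_neighbours_card_less[OF assms(6) x assms(4)] by blast
  finally show ?thesis .
qed

theorem theorem2p1:
  fixes t s :: nat and V :: "'a set" and E :: "'a \<Rightarrow> 'a \<Rightarrow> bool"
  assumes "s \<ge> 1"
    and "graph V E"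
    and "incomparability_graph V E"
    and "\<forall>(VH :: nat set) EH. shallow_minor t VH EH V E \<longrightarrow> \<not> isomorphic VH EH (star_V s) (star_E s)"
  shows "beta_hat t V E \<le> s"
proof -
  define S where "S = {beta_tilde VH EH | (VH :: nat set) EH. VH \<noteq> {} \<and> shallow_minor t VH EH V E}"
  have "b \<le> s" if "b \<in> S" for b
    using that beta_tilde_shallow_minor_le[OF assms] unfolding S_def by blast
  then show ?thesis
    unfolding beta_hat_def S_def[symmetric] by (cases "S = {}") (auto intro: cSup_least)
qed

end
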